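(* Suppose the Hasse diagram $\Gamma$ of $\rho$ consists of vertices $1,\dots,m+p$ ($m\ge3$, $p\ge1$) and exactly two paths from vertex $1$ to vertex $m$: $a_1\cdots a_{m-1}$ through vertices $1,2,\dots,m-1,m$, and $b_1\cdots b_{p+1}$ through vertices $1,m+p,\dots,m+1,m$ (internally disjoint), and no other arrows. Then for every group $G$, every transitive function $u:\rho\to G$ is trivial.
   Context: $\rho$ is a preorder on a finite set; $\mathcal C$ the poset of its equivalence classes ($i\sim j$ iff $i\rho j$ and $j\rho i$; $\hat i\le\hat j$ iff $i\rho j$). $\Gamma$ is the directed graph with vertex set $\mathcal C$ and an arrow from $\alpha$ to $\beta$ iff $\alpha<\beta$ with nothing strictly between. A transitive function on $\rho$ with values in $G$ is $u:\rho\to G$ with $u(i,j)u(j,r)=u(i,r)$ whenever $i\rho j$, $j\rho r$; it is trivial if there are $g_i\in G$ with $u(i,j)=g_ig_j^{-1}$ for all $i\rho j$. *)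

theory Defs
  imports Main
begin

definition pclasses :: "'a set \<Rightarrow> 'a rel \<Rightarrow> 'a set set" where
  "pclasses I \<rho> = I // (\<rho> \<inter> \<rho>\<inverse>)"

definition cls_le :: "'a rel \<Rightarrow> 'a set \<Rightarrow> 'a set \<Rightarrow> bool" where
  "cls_le \<rho> \<alpha> \<beta> \<longleftrightarrow> (\<exists>i\<in>\<alpha>. \<exists>j\<in>\<beta>. (i, j) \<in> \<rho>)"

definition cls_less :: "'a rel \<Rightarrow> 'a set \<Rightarrow> 'a set \<Rightarrow> bool" where
  "cls_less \<rho> \<alpha> \<beta> \<longleftrightarrow> cls_le \<rho> \<alpha> \<beta> \<and> \<alpha> \<noteq> \<beta>"

definition hasse_arrow :: "'a set \<Rightarrow> 'a rel \<Rightarrow> 'a set \<Rightarrow> 'a set \<Rightarrow> bool" where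
  "hasse_arrow I \<rho> \<alpha> \<beta> \<longleftrightarrow>
     \<alpha> \<in> pclasses I \<rho> \<and> \<beta> \<in> pclasses I \<rho> \<and> cls_less \<rho> \<alpha> \<beta> \<and>
     \<not> (\<exists>\<gamma>\<in>pclasses I \<rho>. cls_less \<rho> \<alpha> \<gamma> \<and> cls_less \<rho> \<gamma> \<beta>)"

text \<open>Transitive function on rho with values in a group (written additively, group_add is
  not assumed commutative): u(i,j) u(j,r) = u(i,r).\<close>
definition transitive_fun :: "'a rel \<Rightarrow> ('a \<Rightarrow> 'a \<Rightarrow> 'g::group_add) \<Rightarrow> bool" where
  "transitive_fun \<rho> u \<longleftrightarrow>
     (\<forall>i j r. (i, j) \<in> \<rho> \<longrightarrow> (j, r) \<in> \<rho> \<longrightarrow> u i j + u j r = u i r)"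

definition trivial_fun :: "'a rel \<Rightarrow> ('a \<Rightarrow> 'a \<Rightarrow> 'g::group_add) \<Rightarrow> bool" where
  "trivial_fun \<rho> u \<longleftrightarrow> (\<exists>g. \<forall>i j. (i, j) \<in> \<rho> \<longrightarrow> u i j = g i + - g j)"

definition two_path_edges :: "nat \<Rightarrow> nat \<Rightarrow> (nat \<times> nat) set" where
  "two_path_edges m p =
     {(k, k + 1) | k. 1 \<le> k \<and> k \<le> m - 1}
     \<union> {(1, m + p)}
     \<union> {(k + 1, k) | k. m \<le> k \<and> k \<le> m + p - 1}"

end

theory Submission
  imports Defs
begin

text \<open>Every vertex of the diagram is reachable from vertex 1, so the class of 1 lies below
  all classes and any representative i0 of it is a least element of the preorder. A
  transitive function is then trivial with g i = - u i0 i, because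
  u i0 i + u i j = u i0 j.\<close>

lemma transitive_fun_trivial_if_least:
  assumes "\<rho> \<subseteq> I \<times> I" and least: "\<forall>y\<in>I. (i0, y) \<in> \<rho>" and "transitive_fun \<rho> u"
  shows "trivial_fun \<rho> u"
  unfolding trivial_fun_def
proof (intro exI[of _ "\<lambda>i. - u i0 i"] allI impI)
  fix i j assume ij: "(i, j) \<in> \<rho>"
  then have "(i0, i) \<in> \<rho>" using assms(1) least by blast
  with ij have "u i0 i + u i j = u i0 j"
    using \<open>transitive_fun \<rho> u\<close> unfolding transitive_fun_def by blast
  then have "u i j = - u i0 i + u i0 j" by (metis add.assoc add.left_inverse add_0)
  then show "u i j = - u i0 i + - (- u i0 j)" by simp
qed

lemma pclassesE:
  assumes "C \<in> pclasses I \<rho>"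
  obtains a where "a \<in> I" "C = (\<rho> \<inter> \<rho>\<inverse>) `` {a}"
  using assms unfolding pclasses_def quotient_def by blast

lemma pclasses_rel:
  assumes "preorder_on I \<rho>" "C \<in> pclasses I \<rho>" "x \<in> C" "y \<in> C"
  shows "(x, y) \<in> \<rho>"
proof -
  obtain a where "C = (\<rho> \<inter> \<rho>\<inverse>) `` {a}" using assms(2) by (rule pclassesE)
  with assms(3,4) have "(x, a) \<in> \<rho>" "(a, y) \<in> \<rho>" by auto
  moreover have "trans \<rho>" using assms(1) unfolding preorder_on_def by blast
  ultimately show ?thesis by (meson transD)
qed

lemma pclasses_nonempty:
  assumes "preorder_on I \<rho>" "C \<in> pclasses I \<rho>"
  shows "C \<noteq> {}"
proof -
  obtain a where "a \<in> I" "C = (\<rho> \<inter> \<rho>\<inverse>) `` {a}" using assms(2) by (rule pclassesE)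
  moreover have "(a, a) \<in> \<rho>"
    using assms(1) \<open>a \<in> I\<close> unfolding preorder_on_def refl_on_def by blast
  ultimately show ?thesis by blast
qed

lemma pclasses_cover:
  assumes "preorder_on I \<rho>" "x \<in> I"
  shows "\<exists>C\<in>pclasses I \<rho>. x \<in> C"
proof
  have "(x, x) \<in> \<rho>" using assms unfolding preorder_on_def refl_on_def by blast
  then show "x \<in> (\<rho> \<inter> \<rho>\<inverse>) `` {x}" by simp
  show "(\<rho> \<inter> \<rho>\<inverse>) `` {x} \<in> pclasses I \<rho>"
    unfolding pclasses_def by (rule quotientI[OF assms(2)])
qed

lemma cls_le_iff:
  assumes "preorder_on I \<rho>" "\<alpha> \<in> pclasses I \<rho>" "\<beta> \<in> pclasses I \<rho>"
  shows "cls_le \<rho> \<alpha> \<beta> \<longleftrightarrow> (\<forall>x\<in>\<alpha>. \<forall>y\<in>\<beta>. (x, y) \<in> \<rho>)"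
proof
  assume "cls_le \<rho> \<alpha> \<beta>"
  then obtain i j where "i \<in> \<alpha>" "j \<in> \<beta>" "(i, j) \<in> \<rho>" unfolding cls_le_def by blast
  moreover have "trans \<rho>" using assms(1) unfolding preorder_on_def by blast
  ultimately show "\<forall>x\<in>\<alpha>. \<forall>y\<in>\<beta>. (x, y) \<in> \<rho>"
    using pclasses_rel[OF assms(1,2)] pclasses_rel[OF assms(1,3)] by (meson transD)
next
  assume "\<forall>x\<in>\<alpha>. \<forall>y\<in>\<beta>. (x, y) \<in> \<rho>"
  then show "cls_le \<rho> \<alpha> \<beta>"
    using pclasses_nonempty[OF assms(1,2)] pclasses_nonempty[OF assms(1,3)]
    unfolding cls_le_def by blast
qed

lemma cls_le_trans:
  assumes "preorder_on I \<rho>" "\<alpha> \<in> pclasses I \<rho>" "\<beta> \<in> pclasses I \<rho>" "\<gamma> \<in> pclasses I \<rho>"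
    and "cls_le \<rho> \<alpha> \<beta>" "cls_le \<rho> \<beta> \<gamma>"
  shows "cls_le \<rho> \<alpha> \<gamma>"
proof -
  have "trans \<rho>" using assms(1) unfolding preorder_on_def by blast
  moreover obtain j where "j \<in> \<beta>" using pclasses_nonempty[OF assms(1,3)] by blast
  ultimately show ?thesis
    using assms(5,6) unfolding cls_le_iff[OF assms(1,2,3)] cls_le_iff[OF assms(1,3,4)]
      cls_le_iff[OF assms(1,2,4)] by (meson transD)
qed

lemma cls_le_if_reachable:
  assumes "preorder_on I \<rho>" "\<phi> ` V \<subseteq> pclasses I \<rho>"
    and edge_le: "\<And>k l. (k, l) \<in> E \<Longrightarrow> k \<in> V \<Longrightarrow> l \<in> V \<Longrightarrow> cls_le \<rho> (\<phi> k) (\<phi> l)"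
    and "(k, l) \<in> (E \<inter> V \<times> V)\<^sup>*" "k \<in> V"
  shows "cls_le \<rho> (\<phi> k) (\<phi> l)"
  using assms(4)
proof (induction rule: rtrancl_induct)
  case base
  show ?case using assms(1,2,5) pclasses_nonempty unfolding cls_le_def
    by (metis all_not_in_conv image_subset_iff pclasses_rel)
next
  case (step l l')
  then show ?case using cls_le_trans[OF assms(1)] assms(2,5) edge_le by blast
qed

lemma two_path_edges_reachable:
  assumes "m \<ge> 1" "k \<in> {1..m + p}"
  shows "(1, k) \<in> (two_path_edges m p \<inter> {1..m + p} \<times> {1..m + p})\<^sup>*"
proof -
  let ?E = "two_path_edges m p \<inter> {1..m + p} \<times> {1..m + p}"
  have up: "(1, Suc j) \<in> ?E\<^sup>*" if "j < m" for j
    using that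
  proof (induction j)
    case (Suc j)
    then have "(Suc j, Suc j + 1) \<in> ?E" unfolding two_path_edges_def by auto
    with Suc show ?case by (simp add: rtrancl_into_rtrancl)
  qed simp
  have down: "(1, m + p - j) \<in> ?E\<^sup>*" if "j < p" for j
    using that
  proof (induction j)
    case 0
    then have "(1, m + p) \<in> ?E" using assms(1) unfolding two_path_edges_def by auto
    then show ?case by (simp add: r_into_rtrancl)
  next
    case (Suc j)
    then have "(m + p - Suc j + 1, m + p - Suc j) \<in> ?E"
      unfolding two_path_edges_def by auto
    moreover have "m + p - Suc j + 1 = m + p - j" using Suc.prems by simp
    ultimately show ?case using Suc by (metis Suc_lessD rtrancl_into_rtrancl)
  qed
  show ?thesis
  proof (cases "k \<le> m")
    case True
    then show ?thesis using up[of "k - 1"] assms(2) by simp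
  next
    case False
    then show ?thesis using down[of "m + p - k"] assms(2) by simp
  qed
qed

lemma least_element_if_least_class:
  assumes "preorder_on I \<rho>" "\<alpha> \<in> pclasses I \<rho>"
    and least: "\<forall>\<beta>\<in>pclasses I \<rho>. cls_le \<rho> \<alpha> \<beta>"
  obtains i0 where "\<forall>y\<in>I. (i0, y) \<in> \<rho>"
proof -
  obtain i0 where i0: "i0 \<in> \<alpha>" using pclasses_nonempty[OF assms(1,2)] by blast
  have "(i0, y) \<in> \<rho>" if y: "y \<in> I" for y
  proof -
    obtain \<beta> where \<beta>: "\<beta> \<in> pclasses I \<rho>" "y \<in> \<beta>"
      using pclasses_cover[OF assms(1) y] by blast
    then have "cls_le \<rho> \<alpha> \<beta>" using least by blast
    then show ?thesis using cls_le_iff[OF assms(1,2) \<beta>(1)] i0 \<beta>(2) by blast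
  qed
  then show ?thesis using that by blast
qed

theorem mainTheorem13:
  fixes I :: "'a set" and \<rho> :: "'a rel" and m p :: nat
    and \<phi> :: "nat \<Rightarrow> 'a set"
  assumes "finite I" and "preorder_on I \<rho>"
    and "m \<ge> 3" and "p \<ge> 1"
    and "bij_betw \<phi> {1..m + p} (pclasses I \<rho>)"
    and "\<forall>k\<in>{1..m + p}. \<forall>l\<in>{1..m + p}.
           hasse_arrow I \<rho> (\<phi> k) (\<phi> l) \<longleftrightarrow> (k, l) \<in> two_path_edges m p"
  shows "\<forall>u :: 'a \<Rightarrow> 'a \<Rightarrow> 'g::group_add. transitive_fun \<rho> u \<longrightarrow> trivial_fun \<rho> u"
proof -
  have classes: "\<phi> ` {1..m + p} = pclasses I \<rho>"
    using assms(5) unfolding bij_betw_def by blast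
  have edge_le: "cls_le \<rho> (\<phi> k) (\<phi> l)"
    if "(k, l) \<in> two_path_edges m p" "k \<in> {1..m + p}" "l \<in> {1..m + p}" for k l
  proof -
    have "hasse_arrow I \<rho> (\<phi> k) (\<phi> l)" using assms(6) that by blast
    then show ?thesis unfolding hasse_arrow_def cls_less_def by blast
  qed
  have one: "1 \<in> {1..m + p}" using assms(3) by simp
  have "\<forall>\<beta>\<in>pclasses I \<rho>. cls_le \<rho> (\<phi> 1) \<beta>"
  proof
    fix \<beta> assume "\<beta> \<in> pclasses I \<rho>"
    then obtain k where k: "k \<in> {1..m + p}" "\<beta> = \<phi> k" using classes by (metis imageE)
    have "1 \<le> m" using assms(3) by simp
    then have "(1, k) \<in> (two_path_edges m p \<inter> {1..m + p} \<times> {1..m + p})\<^sup>*"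
      using two_path_edges_reachable k(1) by blast
    then show "cls_le \<rho> (\<phi> 1) \<beta>"
      using cls_le_if_reachable[where V = "{1..m + p}" and E = "two_path_edges m p",
          OF assms(2) equalityD1[OF classes] edge_le _ one] k(2) by blast
  qed
  moreover have "\<phi> 1 \<in> pclasses I \<rho>" using classes one by blast
  ultimately obtain i0 where least: "\<forall>y\<in>I. (i0, y) \<in> \<rho>"
    using least_element_if_least_class[OF assms(2)] by blast
  have "\<rho> \<subseteq> I \<times> I" using assms(2) unfolding preorder_on_def by blast
  then show ?thesis by (intro allI impI transitive_fun_trivial_if_least[OF _ least])
qed

end
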